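(* Let $N\in\mathbb{N}_+$, let $\mathcal{R}$ be a countable set, and let $f:\mathbb{R}^N\to\mathcal{R}$. Suppose $f$ admits a dominating set $S\subseteq[N]$ of sensitivity $s>0$. Let $\epsilon>0$ and consider the mechanism $\mathcal{A}$ which, on input $x\in\mathbb{R}^N$, samples independent random variables $X_i\sim\mathsf{Lap}(s/\epsilon)$ for $i\in S$, forms $\tilde x$ by $\tilde x^{(i)}=x^{(i)}+X_i$ for $i\in S$ and $\tilde x^{(i)}=x^{(i)}$ for $i\notin S$, and outputs $f(\tilde x)$. Then $\mathcal{A}$ is $(\epsilon,0)$-differentially private: for all neighboring $x,x'\in\mathbb{R}^N$ and all $y\in\mathcal{R}$, $\Pr[\mathcal{A}(x)=y]\le e^{\epsilon}\Pr[\mathcal{A}(x')=y]$.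
   Context: Two vectors $x,x'\in\mathbb{R}^N$ are neighboring if $\|x-x'\|_0\le 1$ and $\|x-x'\|_\infty\le 1$ (they differ in at most one coordinate, by at most $1$). For $x\in\mathbb{R}^N$ and $S\subseteq[N]$, $x|_S\in\mathbb{R}^S$ denotes the restriction of $x$ to the coordinates in $S$, and $f(x|_S,x|_{[N]\setminus S})$ means $f(x)$. Dominating set: $f$ admits a dominating set $S\subseteq[N]$ of sensitivity $s\ge 0$ if for every pair of neighboring $x,x'$ there is a vector $a\in\mathbb{R}^S$ with $\|a\|_1\le s$ such that (i) $a$ is a function only of $f(x)$ and $x'-x$, and (ii) $f(x'|_S+a,\;x'|_{[N]\setminus S})=f(x)$. $\mathsf{Lap}(b)$ is the Laplace distribution with density $\frac{1}{2b}e^{-|x|/b}$. *)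

theory Defs
  imports "HOL-Probability.Probability"
begin

text \<open>Vectors in R^N are elements of real ^ 'n for a finite index type 'n (N = CARD('n)).\<close>

definition neighboring :: "real ^ 'n \<Rightarrow> real ^ 'n \<Rightarrow> bool" where
  "neighboring x x' \<longleftrightarrow>
     card {i. x $ i \<noteq> x' $ i} \<le> 1 \<and> (\<forall>i. \<bar>x $ i - x' $ i\<bar> \<le> 1)"

text \<open>A vector a in R^S is represented as a vector of real ^ 'n vanishing outside S;
  then f(x'|_S + a, x'|_{[N]-S}) is f (x' + a).  Condition (i) (a depends only on
  f(x) and x' - x) is expressed by a choice function A applied to f x and x' - x.\<close>

definition dominating_set :: "(real ^ 'n \<Rightarrow> 'r) \<Rightarrow> 'n set \<Rightarrow> real \<Rightarrow> bool" where
  "dominating_set f S s \<longleftrightarrow> s \<ge> 0 \<and>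
     (\<exists>A :: 'r \<Rightarrow> real ^ 'n \<Rightarrow> real ^ 'n.
        \<forall>x x'. neighboring x x' \<longrightarrow>
          (let a = A (f x) (x' - x) in
             (\<forall>i. i \<notin> S \<longrightarrow> a $ i = 0) \<and>
             (\<Sum>i\<in>S. \<bar>a $ i\<bar>) \<le> s \<and>
             f (x' + a) = f x))"

definition laplace_density :: "real \<Rightarrow> real \<Rightarrow> real" where
  "laplace_density b x = exp (- \<bar>x\<bar> / b) / (2 * b)"

definition Lap :: "real \<Rightarrow> real measure" where
  "Lap b = density lborel (\<lambda>x. ennreal (laplace_density b x))"

definition lap_mech :: "(real ^ 'n \<Rightarrow> 'r) \<Rightarrow> 'n set \<Rightarrow> real \<Rightarrow> real \<Rightarrow> real ^ 'n \<Rightarrow> 'r measure" where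
  "lap_mech f S s \<epsilon> x =
     distr (PiM S (\<lambda>_. Lap (s / \<epsilon>))) (count_space UNIV)
       (\<lambda>z. f (\<chi> i. if i \<in> S then x $ i + z i else x $ i))"

end

theory Submission
  imports Defs
begin

text \<open>Put \<open>b = s / \<epsilon>\<close>. On input \<open>x\<close> the output law is the image of the product
  measure \<open>\<mu> = Lap(b)\<^sup>S\<close> under \<open>z \<mapsto> f (x + z)\<close>. For neighbours \<open>x, x'\<close> and an output
  \<open>y\<close>, the dominating set yields a correction \<open>a\<close> with \<open>\<parallel>a\<parallel>\<^sub>1 \<le> s\<close> that depends only on
  \<open>y\<close> and \<open>x' - x\<close>, so translating the noise by \<open>a\<close> maps the whole event
  \<open>{z. f (x + z) = y}\<close> into \<open>{z. f (x' + z) = y}\<close>. The Laplace density changes by at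
  most the factor \<open>exp (\<parallel>a\<parallel>\<^sub>1 / b) \<le> e\<^sup>\<epsilon>\<close> under such a translation.\<close>

lemma indicator_PiE_eq_prod:
  assumes "finite I" "z \<in> extensional I"
  shows "indicator (Pi\<^sub>E I A) z = (\<Prod>i\<in>I. indicator (A i) (z i) :: ennreal)"
proof (cases "z \<in> Pi\<^sub>E I A")
  case False
  then obtain i where "i \<in> I" "z i \<notin> A i"
    using assms(2) by (auto simp: PiE_iff)
  with False assms(1) show ?thesis
    by (auto intro!: prod_zero bexI[of _ i])
qed (simp add: PiE_iff)

lemma PiM_density:
  fixes D :: "'i \<Rightarrow> 'a \<Rightarrow> ennreal"
  assumes fin: "finite I" and M: "sigma_finite_measure M"
    and D[measurable]: "\<And>i. D i \<in> borel_measurable M" and D_finite: "\<And>i x. D i x \<noteq> \<infinity>"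
  shows "PiM I (\<lambda>i. density M (D i)) = density (PiM I (\<lambda>_. M)) (\<lambda>z. \<Prod>i\<in>I. D i (z i))"
proof -
  interpret MD: product_sigma_finite "\<lambda>i. density M (D i)"
    using D D_finite by (auto intro!: product_sigma_finite.intro
        simp: sigma_finite_measure.sigma_finite_iff_density_finite[OF M])
  interpret MM: product_sigma_finite "\<lambda>_. M"
    by (intro product_sigma_finite.intro M)
  show ?thesis
  proof (rule MD.PiM_eqI[OF fin, symmetric])
    fix A assume "\<And>i. i \<in> I \<Longrightarrow> A i \<in> sets (density M (D i))"
    then have A[measurable]: "\<And>i. i \<in> I \<Longrightarrow> A i \<in> sets M" by simp
    have "emeasure (density (PiM I (\<lambda>_. M)) (\<lambda>z. \<Prod>i\<in>I. D i (z i))) (Pi\<^sub>E I A)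
        = (\<integral>\<^sup>+ z. (\<Prod>i\<in>I. D i (z i) * indicator (A i) (z i)) \<partial>PiM I (\<lambda>_. M))"
      using fin A by (auto simp: emeasure_density space_PiM PiE_iff indicator_PiE_eq_prod
          prod.distrib intro!: nn_integral_cong sets_PiM_I_finite)
    also have "\<dots> = (\<Prod>i\<in>I. \<integral>\<^sup>+ t. D i t * indicator (A i) t \<partial>M)"
      using A by (intro MM.product_nn_integral_prod fin) auto
    also have "\<dots> = (\<Prod>i\<in>I. emeasure (density M (D i)) (A i))"
      using A by (simp add: emeasure_density)
    finally show "emeasure (density (PiM I (\<lambda>_. M)) (\<lambda>z. \<Prod>i\<in>I. D i (z i))) (Pi\<^sub>E I A)
        = (\<Prod>i\<in>I. emeasure (density M (D i)) (A i))" .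
  qed (simp only: sets_density, intro sets_PiM_cong refl, simp)
qed

lemma distr_PiM_componentwise:
  assumes fin: "finite I" and M: "\<And>i. sigma_finite_measure (M i)"
    and MX: "\<And>i. sigma_finite_measure (distr (M i) (N i) (X i))"
    and X[measurable]: "\<And>i. X i \<in> M i \<rightarrow>\<^sub>M N i"
  shows "distr (PiM I M) (PiM I N) (\<lambda>z. \<lambda>i\<in>I. X i (z i)) = PiM I (\<lambda>i. distr (M i) (N i) (X i))"
proof -
  interpret MX: product_sigma_finite "\<lambda>i. distr (M i) (N i) (X i)"
    by (intro product_sigma_finite.intro MX)
  interpret M: product_sigma_finite M
    by (intro product_sigma_finite.intro M)
  show ?thesis
  proof (rule MX.PiM_eqI[OF fin])
    fix A assume "\<And>i. i \<in> I \<Longrightarrow> A i \<in> sets (distr (M i) (N i) (X i))"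
    then have A[measurable]: "\<And>i. i \<in> I \<Longrightarrow> A i \<in> sets (N i)" by simp
    have "(\<lambda>z. \<lambda>i\<in>I. X i (z i)) -` Pi\<^sub>E I A \<inter> space (PiM I M)
        = Pi\<^sub>E I (\<lambda>i. X i -` A i \<inter> space (M i))"
      by (auto simp: space_PiM PiE_iff)
    moreover have "Pi\<^sub>E I A \<in> sets (PiM I N)"
      using fin by (simp add: sets_PiM_I_finite)
    ultimately have "emeasure (distr (PiM I M) (PiM I N) (\<lambda>z. \<lambda>i\<in>I. X i (z i))) (Pi\<^sub>E I A)
        = emeasure (PiM I M) (Pi\<^sub>E I (\<lambda>i. X i -` A i \<inter> space (M i)))"
      by (simp add: emeasure_distr)
    also have "\<dots> = (\<Prod>i\<in>I. emeasure (distr (M i) (N i) (X i)) (A i))"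
      using fin by (simp add: M.emeasure_PiM measurable_sets emeasure_distr)
    finally show "emeasure (distr (PiM I M) (PiM I N) (\<lambda>z. \<lambda>i\<in>I. X i (z i))) (Pi\<^sub>E I A)
        = (\<Prod>i\<in>I. emeasure (distr (M i) (N i) (X i)) (A i))" .
  qed (simp only: sets_distr, intro sets_PiM_cong refl, simp)
qed

lemma distr_density_lborel_translate:
  fixes D :: "real \<Rightarrow> ennreal"
  assumes [measurable]: "D \<in> borel_measurable borel"
  shows "distr (density lborel D) borel (\<lambda>t. t + c) = density lborel (\<lambda>t. D (t - c))"
proof -
  have "(\<lambda>t. t + c) = (+) c"
    by (simp add: fun_eq_iff)
  then show ?thesis
    using density_distr[of "\<lambda>t. D (t - c)" borel "(+) c" lborel] by (simp add: lborel_distr_plus)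
qed

lemma emeasure_density_le_cmult:
  assumes [measurable]: "f \<in> borel_measurable M" "g \<in> borel_measurable M" "A \<in> sets M"
    and le: "\<And>x. x \<in> space M \<Longrightarrow> g x \<le> K * f x"
  shows "emeasure (density M g) A \<le> K * emeasure (density M f) A"
proof -
  have "emeasure (density M g) A = (\<integral>\<^sup>+ x. g x * indicator A x \<partial>M)"
    by (simp add: emeasure_density)
  also have "\<dots> \<le> (\<integral>\<^sup>+ x. K * (f x * indicator A x) \<partial>M)"
    using le by (intro nn_integral_mono) (auto simp: indicator_def mult.assoc)
  also have "\<dots> = K * emeasure (density M f) A"
    by (simp add: nn_integral_cmult emeasure_density)
  finally show ?thesis .
qed

lemma borel_measurable_laplace_density[measurable]: "laplace_density b \<in> borel_measurable borel"
  unfolding laplace_density_def by measurable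

lemma sets_Lap[simp, measurable_cong]: "sets (Lap b) = sets borel"
  by (simp add: Lap_def)

lemma space_Lap[simp]: "space (Lap b) = UNIV"
  by (simp add: Lap_def)

lemma sets_PiM_Lap: "sets (PiM I (\<lambda>_. Lap b)) = sets (PiM I (\<lambda>_. lborel))"
  by (intro sets_PiM_cong) simp_all

lemma prob_space_Lap:
  assumes "b > 0"
  shows "prob_space (Lap b)"
proof
  let ?e = "exponential_density (1 / b)"
  have exp_1: "(\<integral>\<^sup>+ t. ennreal (?e t) \<partial>lborel) = 1"
    using prob_space.emeasure_space_1[OF prob_space_exponential_density[of "1 / b"]] assms
    by (simp add: emeasure_density)
  have exp_reflected_1: "(\<integral>\<^sup>+ t. ennreal (?e (- t)) \<partial>lborel) = 1"
    using exp_1 by (subst lborel_distr_uminus[symmetric], subst nn_integral_distr) auto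
  \<comment> \<open>Off the null set \<open>{0}\<close>, \<open>Lap b\<close> is the even symmetrisation of \<open>Exp (1 / b)\<close>.\<close>
  have "AE t in lborel. ennreal (laplace_density b t)
      = ennreal (1 / 2) * ennreal (?e t) + ennreal (1 / 2) * ennreal (?e (- t))"
  proof (rule eventually_mono[OF AE_lborel_singleton[of 0]])
    fix t :: real assume "t \<noteq> 0"
    then have "laplace_density b t = 1 / 2 * ?e t + 1 / 2 * ?e (- t)"
      using assms by (auto simp: laplace_density_def exponential_density_def field_simps)
    then show "ennreal (laplace_density b t)
        = ennreal (1 / 2) * ennreal (?e t) + ennreal (1 / 2) * ennreal (?e (- t))"
      using exponential_density_nonneg[of "1 / b"] assms
      by (simp only: ennreal_plus ennreal_mult mult_nonneg_nonneg divide_nonneg_nonneg zero_le_one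
          zero_le_numeral divide_pos_pos zero_less_one simp_thms)
  qed
  then have "(\<integral>\<^sup>+ t. ennreal (laplace_density b t) \<partial>lborel)
      = ennreal (1 / 2) * (\<integral>\<^sup>+ t. ennreal (?e t) \<partial>lborel)
        + ennreal (1 / 2) * (\<integral>\<^sup>+ t. ennreal (?e (- t)) \<partial>lborel)"
    by (simp add: nn_integral_cong_AE nn_integral_add nn_integral_cmult)
  also have "\<dots> = ennreal (1 / 2 + 1 / 2)"
    unfolding exp_1 exp_reflected_1
    by (simp only: mult_1_right ennreal_plus divide_nonneg_nonneg zero_le_one zero_le_numeral)
  finally show "emeasure (Lap b) (space (Lap b)) = 1"
    unfolding Lap_def by (subst emeasure_density) auto
qed

lemma laplace_density_nonneg: "b \<ge> 0 \<Longrightarrow> 0 \<le> laplace_density b t"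
  by (simp add: laplace_density_def)

lemma laplace_density_translate_le:
  assumes "b > 0"
  shows "laplace_density b (t - c) \<le> exp (\<bar>c\<bar> / b) * laplace_density b t"
proof -
  have "- \<bar>t - c\<bar> / b \<le> \<bar>c\<bar> / b + - \<bar>t\<bar> / b"
    using assms by (simp add: divide_simps)
  then have "exp (- \<bar>t - c\<bar> / b) \<le> exp (\<bar>c\<bar> / b) * exp (- \<bar>t\<bar> / b)"
    by (simp add: exp_add[symmetric])
  with assms show ?thesis
    unfolding laplace_density_def
    by (simp add: divide_right_mono mult.assoc[symmetric] del: exp_le_cancel_iff)
qed

lemma prod_laplace_density_translate_le:
  assumes "b > 0"
  shows "(\<Prod>i\<in>I. laplace_density b (z i - c i))
    \<le> exp ((\<Sum>i\<in>I. \<bar>c i\<bar>) / b) * (\<Prod>i\<in>I. laplace_density b (z i))"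
proof -
  have "(\<Prod>i\<in>I. laplace_density b (z i - c i)) \<le> (\<Prod>i\<in>I. exp (\<bar>c i\<bar> / b) * laplace_density b (z i))"
    using assms by (intro prod_mono) (simp add: laplace_density_nonneg laplace_density_translate_le)
  also have "\<dots> = exp ((\<Sum>i\<in>I. \<bar>c i\<bar>) / b) * (\<Prod>i\<in>I. laplace_density b (z i))"
    by (cases "finite I") (simp_all add: prod.distrib exp_sum sum_divide_distrib)
  finally show ?thesis .
qed

lemma PiM_Lap_eq_density:
  "finite I \<Longrightarrow>
    PiM I (\<lambda>_. Lap b) = density (PiM I (\<lambda>_. lborel)) (\<lambda>z. \<Prod>i\<in>I. ennreal (laplace_density b (z i)))"
  unfolding Lap_def by (rule PiM_density) (auto intro: sigma_finite_lborel)

lemma distr_PiM_Lap_translate: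
  assumes fin: "finite I" and b: "b > 0"
  shows "distr (PiM I (\<lambda>_. Lap b)) (PiM I (\<lambda>_. lborel)) (\<lambda>z. \<lambda>i\<in>I. z i + c i)
    = density (PiM I (\<lambda>_. lborel)) (\<lambda>z. \<Prod>i\<in>I. ennreal (laplace_density b (z i - c i)))"
proof -
  have translate: "distr (Lap b) lborel (\<lambda>t. t + c i)
      = density lborel (\<lambda>t. ennreal (laplace_density b (t - c i)))" for i
    using distr_density_lborel_translate[of "\<lambda>t. ennreal (laplace_density b t)" "c i"]
    by (simp add: Lap_def cong: distr_cong)
  have "distr (PiM I (\<lambda>_. Lap b)) (PiM I (\<lambda>_. lborel)) (\<lambda>z. \<lambda>i\<in>I. z i + c i)
      = PiM I (\<lambda>i. density lborel (\<lambda>t. ennreal (laplace_density b (t - c i))))"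
    unfolding translate[symmetric] using prob_space_Lap[OF b]
    by (intro distr_PiM_componentwise fin prob_space_imp_sigma_finite prob_space.prob_space_distr) auto
  also have "\<dots> = density (PiM I (\<lambda>_. lborel)) (\<lambda>z. \<Prod>i\<in>I. ennreal (laplace_density b (z i - c i)))"
    by (rule PiM_density) (auto intro: fin sigma_finite_lborel)
  finally show ?thesis .
qed

lemma emeasure_PiM_Lap_translate_le:
  assumes fin: "finite I" and b: "b > 0" and E: "E \<in> sets (PiM I (\<lambda>_. lborel))"
  shows "emeasure (PiM I (\<lambda>_. Lap b)) ((\<lambda>z. \<lambda>i\<in>I. z i + c i) -` E \<inter> space (PiM I (\<lambda>_. Lap b)))
    \<le> ennreal (exp ((\<Sum>i\<in>I. \<bar>c i\<bar>) / b)) * emeasure (PiM I (\<lambda>_. Lap b)) E"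
proof -
  have "(\<lambda>z. \<lambda>i\<in>I. z i + c i) \<in> PiM I (\<lambda>_. Lap b) \<rightarrow>\<^sub>M PiM I (\<lambda>_. lborel)"
    by measurable
  with E have "emeasure (PiM I (\<lambda>_. Lap b)) ((\<lambda>z. \<lambda>i\<in>I. z i + c i) -` E \<inter> space (PiM I (\<lambda>_. Lap b)))
      = emeasure (density (PiM I (\<lambda>_. lborel)) (\<lambda>z. \<Prod>i\<in>I. ennreal (laplace_density b (z i - c i)))) E"
    by (simp add: emeasure_distr distr_PiM_Lap_translate[OF fin b, symmetric])
  also have "\<dots> \<le> ennreal (exp ((\<Sum>i\<in>I. \<bar>c i\<bar>) / b))
      * emeasure (density (PiM I (\<lambda>_. lborel)) (\<lambda>z. \<Prod>i\<in>I. ennreal (laplace_density b (z i)))) E"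
  proof (rule emeasure_density_le_cmult[OF _ _ E])
    fix z
    show "(\<Prod>i\<in>I. ennreal (laplace_density b (z i - c i)))
        \<le> ennreal (exp ((\<Sum>i\<in>I. \<bar>c i\<bar>) / b)) * (\<Prod>i\<in>I. ennreal (laplace_density b (z i)))"
      using ennreal_leI[OF prod_laplace_density_translate_le[OF b, of z c I]]
      by (simp add: prod_ennreal laplace_density_nonneg[OF less_imp_le[OF b]] prod_nonneg ennreal_mult)
  next
    show "(\<lambda>z. \<Prod>i\<in>I. ennreal (laplace_density b (z i))) \<in> borel_measurable (PiM I (\<lambda>_. lborel))"
      by measurable
  next
    show "(\<lambda>z. \<Prod>i\<in>I. ennreal (laplace_density b (z i - c i))) \<in> borel_measurable (PiM I (\<lambda>_. lborel))"
      by measurable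
  qed
  also have "\<dots> = ennreal (exp ((\<Sum>i\<in>I. \<bar>c i\<bar>) / b)) * emeasure (PiM I (\<lambda>_. Lap b)) E"
    unfolding PiM_Lap_eq_density[OF fin] ..
  finally show ?thesis .
qed

lemma measure_PiM_Lap_translate_le:
  assumes fin: "finite I" and b: "b > 0"
    and A: "A \<in> sets (PiM I (\<lambda>_. Lap b))" and B: "B \<in> sets (PiM I (\<lambda>_. Lap b))"
    and c: "(\<Sum>i\<in>I. \<bar>c i\<bar>) \<le> r" and AB: "\<And>z. z \<in> A \<Longrightarrow> (\<lambda>i\<in>I. z i + c i) \<in> B"
  shows "measure (PiM I (\<lambda>_. Lap b)) A \<le> exp (r / b) * measure (PiM I (\<lambda>_. Lap b)) B"
proof -
  let ?\<mu> = "PiM I (\<lambda>_. Lap b)" and ?h = "\<lambda>z. \<lambda>i\<in>I. z i + c i"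
  interpret \<mu>: prob_space ?\<mu>
    using prob_space_Lap[OF b] by (rule prob_space_PiM)
  have "?h \<in> ?\<mu> \<rightarrow>\<^sub>M ?\<mu>"
    by measurable
  with A B AB have "emeasure ?\<mu> A \<le> emeasure ?\<mu> (?h -` B \<inter> space ?\<mu>)"
    by (intro emeasure_mono measurable_sets) (auto dest: sets.sets_into_space)
  also have "\<dots> \<le> ennreal (exp ((\<Sum>i\<in>I. \<bar>c i\<bar>) / b)) * emeasure ?\<mu> B"
    using B by (intro emeasure_PiM_Lap_translate_le fin b) (simp add: sets_PiM_Lap)
  also have "\<dots> \<le> ennreal (exp (r / b)) * emeasure ?\<mu> B"
    using b c by (intro mult_right_mono ennreal_leI) (auto simp: divide_right_mono)
  finally show ?thesis
    by (simp add: \<mu>.emeasure_eq_measure ennreal_mult[symmetric])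
qed

definition perturb :: "'n set \<Rightarrow> real ^ 'n \<Rightarrow> ('n \<Rightarrow> real) \<Rightarrow> real ^ 'n" where
  "perturb S x z = (\<chi> i. if i \<in> S then x $ i + z i else x $ i)"

lemma lap_mech_eq_distr_perturb:
  "lap_mech f S s \<epsilon> x = distr (PiM S (\<lambda>_. Lap (s / \<epsilon>))) (count_space UNIV) (\<lambda>z. f (perturb S x z))"
  by (simp add: lap_mech_def perturb_def)

lemma measurable_perturb[measurable]: "perturb S x \<in> borel_measurable (PiM S (\<lambda>_. Lap b))"
proof -
  have "perturb S x = (\<lambda>z. x + (\<Sum>j\<in>S. z j *\<^sub>R axis j 1))"
    by (simp add: fun_eq_iff vec_eq_iff perturb_def axis_def
        if_distrib[where f = "\<lambda>t. _ * t"] cong: if_cong)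
  then show ?thesis
    by simp
qed

lemma perturb_translate:
  assumes "\<And>i. i \<notin> S \<Longrightarrow> a $ i = 0"
  shows "perturb S x' (\<lambda>i\<in>S. z i + a $ i) = perturb S x z + (x' - x) + a"
  using assms by (auto simp: vec_eq_iff perturb_def)

lemma neighboring_translate:
  assumes "neighboring x x'"
  shows "neighboring u (u + (x' - x))"
proof -
  have "{i. u $ i \<noteq> (u + (x' - x)) $ i} = {i. x $ i \<noteq> x' $ i}"
    by auto
  with assms show ?thesis
    unfolding neighboring_def by (simp add: abs_minus_commute)
qed

lemma dominating_set_uniform_translate:
  fixes f :: "real ^ 'n \<Rightarrow> 'r"
  assumes dom: "dominating_set f S s" and nb: "neighboring x x'"
  obtains a :: "real ^ 'n" where "(\<Sum>i\<in>S. \<bar>a $ i\<bar>) \<le> s"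
    and "\<And>z. f (perturb S x z) = y \<Longrightarrow> f (perturb S x' (\<lambda>i\<in>S. z i + a $ i)) = y"
proof (cases "\<exists>z. f (perturb S x z) = y")
  case True
  then obtain z0 where z0: "f (perturb S x z0) = y" ..
  obtain A :: "'r \<Rightarrow> real ^ 'n \<Rightarrow> real ^ 'n" where A: "\<And>u u'. neighboring u u' \<Longrightarrow>
      (\<forall>i. i \<notin> S \<longrightarrow> A (f u) (u' - u) $ i = 0) \<and> (\<Sum>i\<in>S. \<bar>A (f u) (u' - u) $ i\<bar>) \<le> s
      \<and> f (u' + A (f u) (u' - u)) = f u"
    using dom unfolding dominating_set_def Let_def by blast
  \<comment> \<open>By condition (i) the correction at \<open>perturb S x z\<close> is \<open>A y (x' - x)\<close>, the same for all \<open>z\<close>.\<close>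
  have A_at: "(\<forall>i. i \<notin> S \<longrightarrow> A y (x' - x) $ i = 0) \<and> (\<Sum>i\<in>S. \<bar>A y (x' - x) $ i\<bar>) \<le> s
      \<and> f (perturb S x z + (x' - x) + A y (x' - x)) = y" if "f (perturb S x z) = y" for z
    using A[OF neighboring_translate[OF nb, of "perturb S x z"]] that by simp
  show ?thesis
  proof (rule that[of "A y (x' - x)"])
    show "(\<Sum>i\<in>S. \<bar>A y (x' - x) $ i\<bar>) \<le> s"
      using A_at[OF z0] by blast
    show "f (perturb S x' (\<lambda>i\<in>S. z i + A y (x' - x) $ i)) = y" if "f (perturb S x z) = y" for z
      using A_at[OF that] perturb_translate[of S "A y (x' - x)" x' z x] by simp
  qed
next
  case False
  show ?thesis
  proof (rule that[of 0])
    show "(\<Sum>i\<in>S. \<bar>0 $ i\<bar>) \<le> s"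
      using dom by (simp add: dominating_set_def)
  qed (use False in blast)
qed

theorem theorem3p1:
  fixes f :: "real ^ 'n \<Rightarrow> 'r::countable"
    and S :: "'n set" and s \<epsilon> :: real
  assumes f_meas: "f \<in> measurable borel (count_space UNIV)"
    and dom: "dominating_set f S s"
    and s_pos: "s > 0"
    and eps_pos: "\<epsilon> > 0"
    and nb: "neighboring x x'"
  shows "measure (lap_mech f S s \<epsilon> x) {y} \<le> exp \<epsilon> * measure (lap_mech f S s \<epsilon> x') {y}"
proof -
  define \<mu> where "\<mu> = PiM S (\<lambda>_. Lap (s / \<epsilon>))"
  define E where "E u = (\<lambda>z. f (perturb S u z)) -` {y} \<inter> space \<mu>" for u
  have E_sets: "E u \<in> sets \<mu>" for u
    unfolding E_def \<mu>_def using f_meas by measurable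
  have output_eq: "measure (lap_mech f S s \<epsilon> u) {y} = measure \<mu> (E u)" for u
    using f_meas by (simp add: lap_mech_eq_distr_perturb measure_distr E_def \<mu>_def)
  obtain a where a_l1: "(\<Sum>i\<in>S. \<bar>a $ i\<bar>) \<le> s"
    and a_shift: "\<And>z. f (perturb S x z) = y \<Longrightarrow> f (perturb S x' (\<lambda>i\<in>S. z i + a $ i)) = y"
    using dominating_set_uniform_translate[OF dom nb] by blast
  have "measure \<mu> (E x) \<le> exp (s / (s / \<epsilon>)) * measure \<mu> (E x')"
    unfolding \<mu>_def using s_pos eps_pos E_sets a_l1 a_shift
    by (intro measure_PiM_Lap_translate_le) (auto simp: E_def \<mu>_def space_PiM)
  with s_pos show ?thesis
    by (simp add: output_eq)
qed

end
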